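(* Let $\theta>0$, $q>0$, let $r$ be a positive integer, and let $\mathcal{U}$ be a distribution on $[0,1]$ that is $(\theta,q)$-polynomially bounded below at 1. Let $\phi:[m]\to[n]$ be any fixed allocation of $m$ items to $n$ agents, let $z_i=|\phi^{-1}(i)|$, and let the utilities $u_i(j)$ ($i\in[n]$, $j\in[m]$) be drawn independently from $\mathcal{U}$. Let $\rho:=\left(1-\left(\theta\left(\frac{1}{r+1}\right)^q\right)^{r+1}\right)^{1/4}$. Then for every pair of agents $i,i'$ with $z_i\leq r<z_{i'}$, $$\Pr\left[\sum_{j\in\phi^{-1}(i')}u_i(j)\leq z_i\right]\leq\rho^{z_{i'}/r}.$$
   Context: A distribution $\mathcal{U}$ on $[0,1]$ is $(\theta,q)$-polynomially bounded below at 1 if for every $\alpha\in(0,1]$, $\Pr_{u\sim\mathcal{U}}[u>1-\alpha]\geq\theta\alpha^q$ (this forces $\theta\leq 1$). An allocation $\phi:[m]\to[n]$ assigns item $j$ to agent $\phi(j)$. *)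

theory Defs
  imports "HOL-Probability.Probability"
begin

definition distribution_on_unit :: "real measure \<Rightarrow> bool" where
  "distribution_on_unit U \<longleftrightarrow> prob_space U \<and> sets U = sets borel \<and> emeasure U {0..1} = 1"

definition poly_bounded_below :: "real \<Rightarrow> real \<Rightarrow> real measure \<Rightarrow> bool" where
  "poly_bounded_below \<theta> q U \<longleftrightarrow>
     (\<forall>\<alpha>. 0 < \<alpha> \<and> \<alpha> \<le> 1 \<longrightarrow> measure U {u. u > 1 - \<alpha>} \<ge> \<theta> * \<alpha> powr q)"

text \<open>Items are {0..<m}, agents {0..<n}; the bundle of agent i under phi.\<close>
definition agent_bundle :: "(nat \<Rightarrow> nat) \<Rightarrow> nat \<Rightarrow> nat \<Rightarrow> nat set" where
  "agent_bundle \<phi> m i = {j \<in> {..<m}. \<phi> j = i}"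

definition util_space :: "nat \<Rightarrow> nat \<Rightarrow> real measure \<Rightarrow> (nat \<times> nat \<Rightarrow> real) measure" where
  "util_space n m U = PiM ({..<n} \<times> {..<m}) (\<lambda>_. U)"

end

theory Submission
  imports Defs
begin

(* Split the bundle of agent i' into Z div (r + 1) disjoint blocks of r + 1 items, where
   Z = |phi^-1(i')|.  Utilities are a.s. nonnegative, so if agent i values the whole bundle at
   most z_i <= r, then every block contains an item of utility at most r / (r + 1) = 1 - 1/(r + 1).
   A fixed block has all r + 1 utilities above 1 - 1/(r + 1) with probability at least
   p = (theta (1/(r + 1))^q)^(r + 1), independently of the other blocks, so the event has
   probability at most (1 - p)^(Z div (r + 1)); finally Z div (r + 1) >= Z / (4 r) as Z > r. *)

lemma disjoint_blocks_of_finite_set: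
  assumes "finite S" and "k * s \<le> card S"
  obtains C where "\<And>b. b < k \<Longrightarrow> C b \<subseteq> S" and "\<And>b. b < k \<Longrightarrow> card (C b) = s"
    and "disjoint_family_on C {..<k}"
proof -
  obtain f where f: "bij_betw f {0..<card S} S"
    using ex_bij_betw_nat_finite[OF assms(1)] by blast
  define J where "J b = {b * s..<(b + 1) * s}" for b
  have J_sub: "J b \<subseteq> {0..<card S}" if "b < k" for b
  proof -
    have "(b + 1) * s \<le> k * s" using that by (intro mult_right_mono) auto
    then show ?thesis using assms(2) by (auto simp: J_def)
  qed
  have J_before: "\<forall>x\<in>J a. \<forall>y\<in>J b. x < y" if "a < b" for a b
  proof -
    have "(a + 1) * s \<le> b * s" using that by (intro mult_le_mono1) simp
    then show ?thesis by (auto simp: J_def)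
  qed
  have J_disj: "J a \<inter> J b = {}" if "a \<noteq> b" for a b
    using that J_before[of a b] J_before[of b a] by (cases "a < b") force+
  have inj: "inj_on f {0..<card S}" using f by (simp add: bij_betw_def)
  show ?thesis
  proof
    show "f ` J b \<subseteq> S" if "b < k" for b
      using J_sub[OF that] f by (auto simp: bij_betw_def)
    show "card (f ` J b) = s" if "b < k" for b
      using inj_on_subset[OF inj J_sub[OF that]] by (simp add: card_image J_def)
    show "disjoint_family_on (\<lambda>b. f ` J b) {..<k}"
      unfolding disjoint_family_on_def
    proof (intro ballI impI)
      fix a b assume "a \<in> {..<k}" "b \<in> {..<k}" "a \<noteq> b"
      then have "f ` J a \<inter> f ` J b = f ` (J a \<inter> J b)"
        using inj_on_image_Int[OF inj J_sub J_sub] by simp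
      then show "f ` J a \<inter> f ` J b = {}" using J_disj[OF \<open>a \<noteq> b\<close>] by simp
    qed
  qed
qed

lemma ex_le_sum_div_card:
  fixes f :: "'a \<Rightarrow> real"
  assumes "finite S" and "C \<subseteq> S" and "C \<noteq> {}" and "\<And>x. x \<in> S \<Longrightarrow> 0 \<le> f x"
  shows "\<exists>x\<in>C. f x \<le> sum f S / card C"
proof (rule ccontr)
  assume "\<not> ?thesis"
  then have above: "\<And>x. x \<in> C \<Longrightarrow> sum f S / card C < f x" by auto
  have finC: "finite C" using assms(1,2) finite_subset by blast
  have "sum f S = (\<Sum>x\<in>C. sum f S / card C)"
    using finC assms(3) by simp
  also have "\<dots> < sum f C"
    using finC assms(3) above by (intro sum_strict_mono) auto
  also have "\<dots> \<le> sum f S"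
    using assms by (intro sum_mono2) auto
  finally show False by simp
qed

lemma le_four_mult_div_Suc:
  fixes r z :: nat
  assumes "0 < r" and "r < z"
  shows "z \<le> 4 * r * (z div Suc r)"
proof -
  define k where "k = z div Suc r"
  have "1 \<le> k" using assms(2) by (simp add: k_def div_greater_zero_iff Suc_le_eq)
  then have "k \<le> r * k" "r \<le> r * k" using assms(1) by simp_all
  have "z = k * Suc r + z mod Suc r" unfolding k_def by (rule div_mult_mod_eq[symmetric])
  also have "\<dots> \<le> r * k + k + r" using mod_less_divisor[of "Suc r" z] by simp
  also have "\<dots> \<le> 4 * (r * k)" using \<open>k \<le> r * k\<close> \<open>r \<le> r * k\<close> by linarith
  finally show ?thesis by (simp add: k_def mult.assoc)
qed

lemma power_le_powr:
  fixes x e :: real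
  assumes "0 \<le> x" and "x \<le> 1" and "0 < k" and "e \<le> real k"
  shows "x ^ k \<le> x powr e"
proof (cases "x = 0")
  case True then show ?thesis using assms(3) by (simp add: zero_power)
next
  case False
  then have "x ^ k = x powr real k" using assms(1) by (simp add: powr_realpow)
  also have "\<dots> \<le> x powr e" using assms by (intro powr_mono') auto
  finally show ?thesis .
qed

lemma power_num_blocks_le_powr:
  fixes P p :: real and r z :: nat
  assumes "0 \<le> p" and "p \<le> P" and "P \<le> 1" and "0 < r" and "r < z"
  shows "(1 - P ^ Suc r) ^ (z div Suc r) \<le> ((1 - p ^ Suc r) powr (1/4)) powr (real z / real r)"
proof -
  define \<beta> where "\<beta> = 1 - p ^ Suc r"
  have "0 \<le> 1 - P ^ Suc r" "1 - P ^ Suc r \<le> \<beta>"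
    using assms(1-3) power_le_one[of P "Suc r"] power_mono[of p P "Suc r"] by (simp_all add: \<beta>_def)
  moreover have "\<beta> \<le> 1" using assms(1) by (simp add: \<beta>_def)
  moreover have "0 < z div Suc r" using assms(5) by (simp add: div_greater_zero_iff)
  moreover have "real z \<le> 4 * real r * real (z div Suc r)"
    using le_four_mult_div_Suc[OF assms(4,5)] by (metis of_nat_le_iff of_nat_mult of_nat_numeral)
  then have "real z / real r / 4 \<le> real (z div Suc r)"
    using assms(4) by (simp add: field_simps)
  ultimately have "(1 - P ^ Suc r) ^ (z div Suc r) \<le> \<beta> powr (real z / real r / 4)"
    by (meson order.trans power_le_powr power_mono)
  also have "\<dots> = (\<beta> powr (1/4)) powr (real z / real r)"
    by (simp add: powr_powr ac_simps)
  finally show ?thesis by (simp add: \<beta>_def)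
qed

lemma (in product_prob_space) indep_vars_PiM_components:
  "P.indep_vars M (\<lambda>i \<omega>. \<omega> i) I"
proof (cases "I = {}")
  case True
  then show ?thesis unfolding P.indep_vars_def P.indep_sets_def by simp
next
  case False
  have "distr (PiM I M) (PiM I M) (\<lambda>\<omega>. \<lambda>i\<in>I. \<omega> i) = distr (PiM I M) (PiM I M) (\<lambda>\<omega>. \<omega>)"
    by (rule distr_cong) (auto simp: space_PiM extensional_restrict)
  also have "\<dots> = PiM I M" by (rule distr_id)
  also have "\<dots> = PiM I (\<lambda>i. distr (PiM I M) (M i) (\<lambda>\<omega>. \<omega> i))"
    by (rule PiM_cong) (simp_all add: PiM_component)
  finally show ?thesis
    using False by (subst P.indep_vars_iff_distr_eq_PiM') auto
qed

lemma sets_PiM_no_block_inside: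
  assumes "finite K" and "\<And>b. b \<in> K \<Longrightarrow> finite (C b)" and "\<And>b. b \<in> K \<Longrightarrow> C b \<subseteq> I"
    and "\<And>i. i \<in> I \<Longrightarrow> G i \<in> sets (M i)"
  shows "{\<omega> \<in> space (PiM I M). \<forall>b\<in>K. \<exists>i\<in>C b. \<omega> i \<notin> G i} \<in> sets (PiM I M)"
  using assms
  by (intro sets.sets_Collect_finite_All sets.sets_Collect_finite_Ex sets.sets_Collect_neg
      sets_Collect_single') (auto simp: Int_def[symmetric] subset_iff)

lemma (in product_prob_space) measure_PiM_no_block_inside:
  assumes K: "finite K" and C: "\<And>b. b \<in> K \<Longrightarrow> finite (C b)" "\<And>b. b \<in> K \<Longrightarrow> C b \<subseteq> I"
    and disj: "disjoint_family_on C K" and G: "\<And>i. i \<in> I \<Longrightarrow> G i \<in> sets (M i)"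
  shows "measure (PiM I M) {\<omega> \<in> space (PiM I M). \<forall>b\<in>K. \<exists>i\<in>C b. \<omega> i \<notin> G i}
       = (\<Prod>b\<in>K. 1 - (\<Prod>i\<in>C b. measure (M i) (G i)))"
proof (cases "K = {}")
  case True
  then show ?thesis by (simp add: P.prob_space)
next
  case False
  define X where "X = (\<lambda>b (\<omega> :: 'i \<Rightarrow> 'a). restrict \<omega> (C b))"
  define A where "A b = space (PiM (C b) M) - PiE (C b) G" for b
  have ind: "P.indep_vars (\<lambda>b. PiM (C b) M) X K"
    unfolding X_def using P.indep_vars_restrict[OF indep_vars_PiM_components C(2) disj] by simp
  have A: "A b \<in> sets (PiM (C b) M)" if "b \<in> K" for b
    unfolding A_def using that C G by (intro sets.compl_sets sets_PiM_I_finite) auto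
  have "{\<omega> \<in> space (PiM I M). \<forall>b\<in>K. \<exists>i\<in>C b. \<omega> i \<notin> G i} = (\<Inter>b\<in>K. X b -` A b \<inter> space (PiM I M))"
    using C(2) False by (auto simp: X_def A_def space_PiM PiE_iff extensional_def; blast)
  moreover have "measure (PiM I M) (X b -` A b \<inter> space (PiM I M)) = 1 - (\<Prod>i\<in>C b. measure (M i) (G i))"
    if b: "b \<in> K" for b
  proof -
    have "X b -` A b \<inter> space (PiM I M) = space (PiM I M) - emb I (C b) (PiE (C b) G)"
      using C(2)[OF b] by (auto simp: X_def A_def prod_emb_def space_PiM PiE_iff; blast)
    moreover have "emb I (C b) (PiE (C b) G) \<in> sets (PiM I M)"
      using b C G by (intro sets_PiM_I) auto
    ultimately show ?thesis
      using b C G by (simp add: P.prob_compl measure_PiM_emb subset_iff)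
  qed
  ultimately show ?thesis
    using P.indep_varsD_finite[OF ind False K A] by simp
qed

lemma measure_PiM_sum_le:
  fixes U :: "real measure" and I S :: "'i set" and a :: real and s :: nat
  assumes U: "prob_space U" "sets U = sets borel" and nonneg: "AE u in U. 0 \<le> u"
    and S: "finite S" "S \<subseteq> I" and "0 < s"
  shows "measure (PiM I (\<lambda>_. U)) {\<omega> \<in> space (PiM I (\<lambda>_. U)). sum \<omega> S \<le> a}
       \<le> (1 - measure U {u. a / s < u} ^ s) ^ (card S div s)"
proof -
  interpret U: prob_space U by (rule U(1))
  interpret product_prob_space "\<lambda>_. U" I by unfold_locales
  define k where "k = card S div s"
  define G where "G = {u. a / s < u}"
  have "k * s \<le> card S" unfolding k_def by (rule div_times_less_eq_dividend)
  then obtain C where C: "\<And>b. b < k \<Longrightarrow> C b \<subseteq> S" "\<And>b. b < k \<Longrightarrow> card (C b) = s"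
    and disj: "disjoint_family_on C {..<k}"
    using disjoint_blocks_of_finite_set[OF S(1)] by blast
  have finC: "finite (C b)" if "b < k" for b using finite_subset[OF C(1)[OF that] S(1)] .
  have C_I: "C b \<subseteq> I" if "b < k" for b using C(1)[OF that] S(2) by blast
  have G: "G \<in> sets U" by (simp add: U(2) G_def)
  have "AE \<omega> in PiM I (\<lambda>_. U). \<forall>x\<in>S. 0 \<le> \<omega> x"
    using nonneg S by (intro AE_finite_allI AE_component) auto
  then have "AE \<omega> in PiM I (\<lambda>_. U). sum \<omega> S \<le> a \<longrightarrow> (\<forall>b\<in>{..<k}. \<exists>x\<in>C b. \<omega> x \<notin> G)"
  proof eventually_elim
    case (elim \<omega>)
    have "\<exists>x\<in>C b. \<omega> x \<notin> G" if "sum \<omega> S \<le> a" and b: "b < k" for b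
    proof -
      obtain x where x: "x \<in> C b" "\<omega> x \<le> sum \<omega> S / s"
        using ex_le_sum_div_card[OF S(1) C(1)[OF b], of \<omega>] elim C(2)[OF b] \<open>0 < s\<close> by fastforce
      have "sum \<omega> S / s \<le> a / s"
        using \<open>sum \<omega> S \<le> a\<close> by (rule divide_right_mono) simp
      then have "\<omega> x \<notin> G" using x(2) by (simp add: G_def)
      then show ?thesis using x(1) by blast
    qed
    then show ?case by blast
  qed
  then have "measure (PiM I (\<lambda>_. U)) {\<omega> \<in> space (PiM I (\<lambda>_. U)). sum \<omega> S \<le> a}
      \<le> measure (PiM I (\<lambda>_. U)) {\<omega> \<in> space (PiM I (\<lambda>_. U)). \<forall>b\<in>{..<k}. \<exists>x\<in>C b. \<omega> x \<notin> G}"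
    using C_I finC G by (intro P.finite_measure_mono_AE sets_PiM_no_block_inside) auto
  also have "\<dots> = (1 - measure U G ^ s) ^ k"
    using C_I C(2) finC G disj by (subst measure_PiM_no_block_inside) auto
  finally show ?thesis by (simp add: k_def G_def)
qed

lemma distribution_on_unit_AE_nonneg:
  assumes "distribution_on_unit U"
  shows "AE u in U. 0 \<le> u"
proof -
  interpret prob_space U using assms by (simp add: distribution_on_unit_def)
  have "AE u in U. u \<in> {0..1}"
    using assms by (subst AE_in_set_eq_1) (simp_all add: distribution_on_unit_def emeasure_eq_measure)
  then show ?thesis by eventually_elim simp
qed

lemma poly_bounded_below_le_measure_greater:
  assumes "poly_bounded_below \<theta> q U" and "distribution_on_unit U"
    and "0 < \<alpha>" and "\<alpha> \<le> 1" and "t \<le> 1 - \<alpha>"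
  shows "\<theta> * \<alpha> powr q \<le> measure U {u. t < u}"
proof -
  interpret prob_space U using assms(2) by (simp add: distribution_on_unit_def)
  have "\<theta> * \<alpha> powr q \<le> measure U {u. 1 - \<alpha> < u}"
    using assms(1,3,4) by (simp add: poly_bounded_below_def)
  also have "\<dots> \<le> measure U {u. t < u}"
    using assms(2,5) by (intro finite_measure_mono) (auto simp: distribution_on_unit_def)
  finally show ?thesis .
qed

theorem lemma5:
  fixes \<theta> q :: real and r n m i i' :: nat and U :: "real measure" and \<phi> :: "nat \<Rightarrow> nat"
  assumes "\<theta> > 0" and "q > 0" and "r > 0"
    and "distribution_on_unit U" and "poly_bounded_below \<theta> q U"
    and "\<forall>j<m. \<phi> j < n"
    and "i < n" and "i' < n"
    and "card (agent_bundle \<phi> m i) \<le> r" and "r < card (agent_bundle \<phi> m i')"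
  shows "measure (util_space n m U)
           {u \<in> space (util_space n m U). (\<Sum>j\<in>agent_bundle \<phi> m i'. u (i, j)) \<le> real (card (agent_bundle \<phi> m i))}
         \<le> ((1 - (\<theta> * (1 / (real r + 1)) powr q) ^ (r + 1)) powr (1/4)) powr (real (card (agent_bundle \<phi> m i')) / real r)"
proof -
  define B where "B = agent_bundle \<phi> m i'"
  define z where "z = card (agent_bundle \<phi> m i)"
  define p where "p = \<theta> * (1 / (real r + 1)) powr q"
  have U: "prob_space U" "sets U = sets borel"
    using assms(4) by (simp_all add: distribution_on_unit_def)
  have S: "finite (Pair i ` B)" "Pair i ` B \<subseteq> {..<n} \<times> {..<m}" "card (Pair i ` B) = card B"
    using assms(7) by (auto simp: B_def agent_bundle_def card_image inj_on_def)
  have sum_B: "(\<Sum>j\<in>B. u (i, j)) = sum u (Pair i ` B)" for u :: "nat \<times> nat \<Rightarrow> real"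
    by (simp add: sum.reindex inj_on_def)
  have "real z / real (Suc r) \<le> real r / real (Suc r)"
    using assms(9) by (simp add: z_def divide_right_mono)
  also have "\<dots> = 1 - 1 / (real r + 1)" by (simp add: field_simps)
  finally have p_le: "p \<le> measure U {u. real z / real (Suc r) < u}"
    using poly_bounded_below_le_measure_greater[OF assms(5,4)] by (simp add: p_def)
  have "measure (util_space n m U) {u \<in> space (util_space n m U). (\<Sum>j\<in>B. u (i, j)) \<le> real z}
      \<le> (1 - measure U {u. real z / real (Suc r) < u} ^ Suc r) ^ (card B div Suc r)"
    using measure_PiM_sum_le[OF U distribution_on_unit_AE_nonneg[OF assms(4)] S(1,2), of "Suc r" "real z"]
    by (simp add: util_space_def sum_B S(3))
  also have "\<dots> \<le> ((1 - p ^ Suc r) powr (1/4)) powr (real (card B) / real r)"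
    using p_le prob_space.prob_le_1[OF U(1)] assms(1,3,10) by (intro power_num_blocks_le_powr) (simp_all add: p_def B_def)
  finally show ?thesis by (simp add: B_def z_def p_def)
qed

end
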